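(* Assume $\mu_n\to0$ and $n^{1/2}\mu_n\to\mathfrak m$ with $0\le\mathfrak m<\infty$, and suppose $\theta_n\in\mathbb R$ satisfies $n^{1/2}\theta_n\to\nu\in\mathbb R\cup\{-\infty,\infty\}$. If $\nu\in\mathbb R$, then $F_{A,n,\theta_n}$ converges weakly to the distribution with cdf $$x\mapsto \mathbf 1(x+\nu\ge0)\,\Phi\Big(-\frac{\nu-x}{2}+\sqrt{\big(\tfrac{\nu+x}{2}\big)^2+\mathfrak m^2}\Big)+\mathbf 1(x+\nu<0)\,\Phi\Big(-\frac{\nu-x}{2}-\sqrt{\big(\tfrac{\nu+x}{2}\big)^2+\mathfrak m^2}\Big).$$ If $|\nu|=\infty$, then $F_{A,n,\theta_n}$ converges weakly to $\Phi$ (the standard normal distribution).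
   Context: Gaussian location model: for each sample size $n$, $y_1,\dots,y_n$ are i.i.d. $N(\theta,1)$ with $\theta\in\mathbb R$ unknown; $\bar y$ is their mean. $P_{n,\theta}$ denotes the probability governing a sample of size $n$ when $\theta$ is the true parameter. Given a nonrandom tuning parameter $\mu_n>0$, the adaptive LASSO estimator is $\hat\theta_A=0$ if $|\bar y|\le\mu_n$ and $\hat\theta_A=\bar y-\mu_n^2/\bar y$ if $|\bar y|>\mu_n$. $F_{A,n,\theta}$ denotes the cdf of $n^{1/2}(\hat\theta_A-\theta)$ under $P_{n,\theta}$. $\Phi$ is the standard normal cdf. *)

theory Defs
  imports "HOL-Probability.Probability"
begin

definition Phi :: "real \<Rightarrow> real" where
  "Phi x = cdf (density lborel std_normal_density) x"

definition sample_law :: "nat \<Rightarrow> real \<Rightarrow> (nat \<Rightarrow> real) measure" where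
  "sample_law n \<theta> = PiM {..<n} (\<lambda>_. density lborel (normal_density \<theta> 1))"

definition ybar :: "nat \<Rightarrow> (nat \<Rightarrow> real) \<Rightarrow> real" where
  "ybar n y = (\<Sum>i<n. y i) / real n"

definition alasso :: "real \<Rightarrow> real \<Rightarrow> real" where
  "alasso \<mu> yb = (if \<bar>yb\<bar> \<le> \<mu> then 0 else yb - \<mu>\<^sup>2 / yb)"

definition F_A :: "nat \<Rightarrow> real \<Rightarrow> real \<Rightarrow> real \<Rightarrow> real" where
  "F_A n \<mu> \<theta> x = cdf (distr (sample_law n \<theta>) borel
       (\<lambda>y. sqrt (real n) * (alasso \<mu> (ybar n y) - \<theta>))) x"

definition G_lim :: "real \<Rightarrow> real \<Rightarrow> real \<Rightarrow> real" where
  "G_lim m \<nu> x =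
     (if x + \<nu> \<ge> 0
      then Phi (- (\<nu> - x) / 2 + sqrt (((\<nu> + x) / 2)\<^sup>2 + m\<^sup>2))
      else Phi (- (\<nu> - x) / 2 - sqrt (((\<nu> + x) / 2)\<^sup>2 + m\<^sup>2)))"

end

theory Submission
  imports Defs
begin

(* Put a_n = sqrt n * mu_n and b_n = sqrt n * theta_n. The statistic Z = sqrt n * (ybar - theta_n)
   is standard normal and the estimator is positively homogeneous, so
   sqrt n * (thetahat_A - theta_n) = alasso a_n (Z + b_n) - b_n. For a >= 0, alasso a u <= t holds
   exactly when u <= alasso_inv a t, an explicit root of u^2 - t u - a^2 = 0; hence
   F_{A,n,theta_n}(x) = Phi (alasso_inv a_n (x + b_n) - b_n) exactly, and the limit cdf has the same
   form with a = m and b = nu. It remains to understand alasso_inv: it is jointly continuous except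
   at t = 0 when a > 0, which is exactly where the limit cdf jumps, so that point need not be
   checked; and alasso_inv a t - t = O(a^2 / |t|) as |t| -> oo, which gives the normal limit when
   |nu| = oo. *)

(* A root of u^2 - t u - a^2 = 0, i.e. of u - a^2 / u = t: the nonnegative one if t >= 0, the
   negative one otherwise. *)
definition alasso_inv :: "real \<Rightarrow> real \<Rightarrow> real" where
  "alasso_inv a t =
     (if t \<ge> 0 then t/2 + sqrt ((t/2)\<^sup>2 + a\<^sup>2) else t/2 - sqrt ((t/2)\<^sup>2 + a\<^sup>2))"

lemma alasso_pos: "0 \<le> a \<Longrightarrow> a < u \<Longrightarrow> 0 < alasso a u"
  by (simp add: alasso_def field_simps power2_eq_square mult_strict_mono')

lemma alasso_neg:
  assumes "0 \<le> a" "u < - a"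
  shows "alasso a u < 0"
proof -
  have "a\<^sup>2 < (- u)\<^sup>2"
    using assms by (intro power_strict_mono) auto
  with assms show ?thesis
    by (simp add: alasso_def field_simps power2_eq_square)
qed

lemma alasso_le_iff_of_gt:
  assumes "0 \<le> a" "a < u"
  shows "alasso a u \<le> t \<longleftrightarrow> u \<le> t/2 + sqrt ((t/2)\<^sup>2 + a\<^sup>2)"
proof -
  define s where "s = sqrt ((t/2)\<^sup>2 + a\<^sup>2)"
  have "u - (t/2 - s) > 0"
    using real_sqrt_ge_abs1[of "t/2" a] assms unfolding s_def by linarith
  moreover have "u\<^sup>2 - t*u - a\<^sup>2 = (u - (t/2 - s)) * (u - (t/2 + s))"
    by (simp add: s_def algebra_simps power2_eq_square)
  moreover have "alasso a u \<le> t \<longleftrightarrow> u\<^sup>2 - t*u - a\<^sup>2 \<le> 0"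
    using assms by (simp add: alasso_def field_simps power2_eq_square)
  ultimately show ?thesis
    unfolding s_def[symmetric] by (simp add: mult_le_0_iff)
qed

lemma alasso_le_iff_of_less:
  assumes "0 \<le> a" "u < - a"
  shows "alasso a u \<le> t \<longleftrightarrow> u \<le> t/2 - sqrt ((t/2)\<^sup>2 + a\<^sup>2)"
proof -
  define s where "s = sqrt ((t/2)\<^sup>2 + a\<^sup>2)"
  have "u - (t/2 + s) < 0"
    using real_sqrt_ge_abs1[of "t/2" a] assms unfolding s_def by linarith
  moreover have "u\<^sup>2 - t*u - a\<^sup>2 = (u - (t/2 - s)) * (u - (t/2 + s))"
    by (simp add: s_def algebra_simps power2_eq_square)
  moreover have "alasso a u \<le> t \<longleftrightarrow> 0 \<le> u\<^sup>2 - t*u - a\<^sup>2"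
    using assms by (simp add: alasso_def field_simps power2_eq_square)
  ultimately show ?thesis
    unfolding s_def[symmetric] by (simp add: zero_le_mult_iff)
qed

lemma alasso_inv_ge:
  assumes "0 \<le> t"
  shows "\<bar>a\<bar> \<le> alasso_inv a t"
proof -
  have "\<bar>a\<bar> \<le> sqrt ((t/2)\<^sup>2 + a\<^sup>2)" by (rule real_sqrt_ge_abs2)
  moreover have "alasso_inv a t = t/2 + sqrt ((t/2)\<^sup>2 + a\<^sup>2)"
    using assms by (simp add: alasso_inv_def)
  ultimately show ?thesis using assms by linarith
qed

lemma alasso_inv_less:
  assumes "t < 0"
  shows "alasso_inv a t < - \<bar>a\<bar>"
proof -
  have "\<bar>a\<bar> \<le> sqrt ((t/2)\<^sup>2 + a\<^sup>2)" by (rule real_sqrt_ge_abs2)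
  moreover have "alasso_inv a t = t/2 - sqrt ((t/2)\<^sup>2 + a\<^sup>2)"
    using assms by (simp add: alasso_inv_def)
  ultimately show ?thesis using assms by linarith
qed

lemma alasso_le_iff_le_inv:
  assumes "0 \<le> a"
  shows "alasso a u \<le> t \<longleftrightarrow> u \<le> alasso_inv a t"
proof -
  consider (zero) "\<bar>u\<bar> \<le> a" | (pos) "a < u" | (neg) "u < - a" by linarith
  then show ?thesis
  proof cases
    case zero
    then have "alasso a u = 0" "- a \<le> u" "u \<le> a" by (auto simp: alasso_def)
    then show ?thesis
      using alasso_inv_ge[of t a] alasso_inv_less[of t a] by (cases "0 \<le> t") simp_all
  next
    case pos
    show ?thesis
    proof (cases "0 \<le> t")
      case True
      then show ?thesis
        using alasso_le_iff_of_gt[OF assms pos] by (simp add: alasso_inv_def)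
    next
      case False
      then show ?thesis
        using alasso_pos[OF assms pos] alasso_inv_less[of t a] pos by simp
    qed
  next
    case neg
    show ?thesis
    proof (cases "0 \<le> t")
      case True
      then show ?thesis
        using alasso_neg[OF assms neg] alasso_inv_ge[of t a] neg by simp
    next
      case False
      then show ?thesis
        using alasso_le_iff_of_less[OF assms neg] by (simp add: alasso_inv_def)
    qed
  qed
qed

lemma indep_vars_PiM_components:
  assumes "I \<noteq> {}" and M: "\<And>i. i \<in> I \<Longrightarrow> prob_space (M i)"
  shows "prob_space.indep_vars (PiM I M) M (\<lambda>i \<omega>. \<omega> i) I"
proof -
  interpret prob_space "PiM I M" using M by (rule prob_space_PiM)
  have "distr (PiM I M) (PiM I M) (\<lambda>\<omega>. restrict \<omega> I) = distr (PiM I M) (PiM I M) (\<lambda>\<omega>. \<omega>)"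
    by (rule distr_cong) (auto simp: space_PiM)
  also have "\<dots> = (\<Pi>\<^sub>M i\<in>I. distr (PiM I M) (M i) (\<lambda>\<omega>. \<omega> i))"
    using M by (auto intro!: PiM_cong distr_PiM_component[symmetric])
  finally show ?thesis
    using assms by (subst indep_vars_iff_distr_eq_PiM') auto
qed

lemma prob_space_sample_law: "prob_space (sample_law n \<theta>)"
  unfolding sample_law_def by (auto intro!: prob_space_PiM prob_space_normal_density)

lemma sample_law_component_distributed:
  assumes "i < n"
  shows "distributed (sample_law n \<theta>) lborel (\<lambda>y. y i) (normal_density \<theta> 1)"
proof -
  have "distr (sample_law n \<theta>) lborel (\<lambda>y. y i) =
        distr (sample_law n \<theta>) (density lborel (normal_density \<theta> 1)) (\<lambda>y. y i)"
    by (rule distr_cong) auto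
  also have "\<dots> = density lborel (normal_density \<theta> 1)"
    unfolding sample_law_def using assms
    by (intro distr_PiM_component prob_space_normal_density) auto
  finally show ?thesis
    using assms unfolding distributed_def sample_law_def by auto
qed

lemma sample_law_indep_components:
  assumes "0 < n"
  shows "prob_space.indep_vars (sample_law n \<theta>) (\<lambda>_. borel) (\<lambda>i y. y i) {..<n}"
proof -
  interpret prob_space "sample_law n \<theta>" by (rule prob_space_sample_law)
  have "indep_vars (\<lambda>_. density lborel (normal_density \<theta> 1)) (\<lambda>i y. y i) {..<n}"
    unfolding sample_law_def using assms
    by (intro indep_vars_PiM_components prob_space_normal_density) auto
  then show ?thesis
    by (rule indep_vars_compose2[where Y="\<lambda>_ x. x", simplified]) simp
qed

lemma sum_sample_law_distributed:
  assumes "0 < n"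
  shows "distributed (sample_law n \<theta>) lborel (\<lambda>y. \<Sum>i<n. y i)
           (normal_density (real n * \<theta>) (sqrt (real n)))"
proof -
  interpret prob_space "sample_law n \<theta>" by (rule prob_space_sample_law)
  have "distributed (sample_law n \<theta>) lborel (\<lambda>y. \<Sum>i<n. y i)
          (normal_density (\<Sum>i<n. \<theta>) (sqrt (\<Sum>i<n. 1\<^sup>2)))"
    using assms
    by (intro sum_indep_normal sample_law_indep_components sample_law_component_distributed) auto
  then show ?thesis by simp
qed

lemma standardized_ybar_distributed:
  assumes "0 < n"
  shows "distributed (sample_law n \<theta>) lborel (\<lambda>y. sqrt (real n) * (ybar n y - \<theta>))
           std_normal_density"
proof -
  interpret prob_space "sample_law n \<theta>" by (rule prob_space_sample_law)
  have "sqrt (real n) * (ybar n y - \<theta>) = ((\<Sum>i<n. y i) - real n * \<theta>) / sqrt (real n)" for y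
  proof -
    have "real n = sqrt (real n) * sqrt (real n)" by simp
    then show ?thesis
      using assms unfolding ybar_def by (subst (1 3) \<open>real n = _\<close>) (simp add: field_simps)
  qed
  then show ?thesis
    using normal_standard_normal_convert[of "sqrt (real n)" "\<lambda>y. \<Sum>i<n. y i" "real n * \<theta>"]
      sum_sample_law_distributed[OF assms] assms
    by simp
qed

lemma alasso_mult: "0 < c \<Longrightarrow> alasso (c * \<mu>) (c * y) = c * alasso \<mu> y"
  by (cases "y = 0") (auto simp: alasso_def abs_mult power_mult_distrib field_simps power2_eq_square)

lemma cdf_alasso_std_normal:
  assumes Z: "distributed P lborel Z std_normal_density" and "0 \<le> a"
  shows "cdf (distr P borel (\<lambda>\<omega>. alasso a (Z \<omega> + b) - b)) x = Phi (alasso_inv a (x + b) - b)"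
proof -
  let ?f = "\<lambda>\<omega>. alasso a (Z \<omega> + b) - b" and ?c = "alasso_inv a (x + b) - b"
  have Z_lborel: "Z \<in> measurable P lborel" and [measurable]: "Z \<in> borel_measurable P"
    using Z by (simp_all add: distributed_def)
  have "?f \<omega> \<le> x \<longleftrightarrow> Z \<omega> \<le> ?c" for \<omega>
    using alasso_le_iff_le_inv[OF \<open>0 \<le> a\<close>, of "Z \<omega> + b" "x + b"] by linarith
  then have preimage: "?f -` {..x} \<inter> space P = Z -` {..?c} \<inter> space P"
    by auto
  have "?f \<in> borel_measurable P"
    unfolding alasso_def by measurable
  then have "cdf (distr P borel ?f) x = measure P (?f -` {..x} \<inter> space P)"
    by (simp add: cdf_def measure_distr)
  also have "\<dots> = measure (distr P lborel Z) {..?c}"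
    unfolding preimage using Z_lborel by (simp add: measure_distr)
  also have "\<dots> = Phi ?c"
    using Z by (simp add: distributed_def Phi_def cdf_def)
  finally show ?thesis .
qed

lemma F_A_eq_Phi_alasso_inv:
  assumes "0 < n" "0 \<le> \<mu>"
  shows "F_A n \<mu> \<theta> x =
         Phi (alasso_inv (sqrt (real n) * \<mu>) (x + sqrt (real n) * \<theta>) - sqrt (real n) * \<theta>)"
proof -
  let ?c = "sqrt (real n)"
  have "(\<lambda>y. ?c * (alasso \<mu> (ybar n y) - \<theta>)) =
        (\<lambda>y. alasso (?c * \<mu>) (?c * (ybar n y - \<theta>) + ?c * \<theta>) - ?c * \<theta>)"
    using alasso_mult[of ?c \<mu>] assms by (simp add: algebra_simps)
  then have "F_A n \<mu> \<theta> x = cdf (distr (sample_law n \<theta>) borel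
      (\<lambda>y. alasso (?c * \<mu>) (?c * (ybar n y - \<theta>) + ?c * \<theta>) - ?c * \<theta>)) x"
    unfolding F_A_def by (rule arg_cong)
  also have "\<dots> = Phi (alasso_inv (?c * \<mu>) (x + ?c * \<theta>) - ?c * \<theta>)"
    using assms by (intro cdf_alasso_std_normal standardized_ybar_distributed) simp_all
  finally show ?thesis .
qed

lemma null_sets_density_pos_iff:
  assumes "f \<in> borel_measurable M" "\<And>x. 0 < f x" "A \<in> sets M"
  shows "A \<in> null_sets (density M f) \<longleftrightarrow> A \<in> null_sets M"
proof -
  have "A \<in> null_sets (density M f) \<longleftrightarrow> (AE x in M. x \<in> A \<longrightarrow> f x = 0)"
    using assms by (simp add: null_sets_density_iff)
  also have "\<dots> \<longleftrightarrow> (AE x in M. x \<notin> A)"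
    using assms(2) by (intro AE_cong) (metis less_irrefl)
  also have "\<dots> \<longleftrightarrow> A \<in> null_sets M"
    using assms(3) by (rule AE_iff_null_sets[symmetric])
  finally show ?thesis .
qed

lemma std_normal_distribution_null_sets_iff:
  "A \<in> sets borel \<Longrightarrow> A \<in> null_sets std_normal_distribution \<longleftrightarrow> A \<in> null_sets lborel"
  using normal_density_pos[of 1 0] by (intro null_sets_density_pos_iff) auto

lemma isCont_Phi: "isCont Phi x"
proof -
  interpret real_distribution std_normal_distribution by (rule real_dist_normal_dist)
  have "{x} \<in> null_sets lborel"
    by (simp add: null_sets_def)
  then have "{x} \<in> null_sets std_normal_distribution"
    by (simp add: std_normal_distribution_null_sets_iff)
  then show ?thesis
    unfolding Phi_def by (simp add: isCont_cdf measure_def null_sets_def)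
qed

lemma strict_mono_Phi: "strict_mono Phi"
proof
  fix a b :: real assume "a < b"
  interpret real_distribution std_normal_distribution by (rule real_dist_normal_dist)
  have "{a<..b} \<notin> null_sets lborel"
    using \<open>a < b\<close> by (simp add: null_sets_def)
  then have "{a<..b} \<notin> null_sets std_normal_distribution"
    by (simp add: std_normal_distribution_null_sets_iff)
  then have "0 < measure std_normal_distribution {a<..b}"
    by (simp add: emeasure_eq_measure null_sets_def zero_less_measure_iff)
  moreover have "Phi b = Phi a + measure std_normal_distribution {a<..b}"
    unfolding Phi_def using \<open>a < b\<close> by (simp add: cdf_diff_eq[symmetric])
  ultimately show "Phi a < Phi b" by simp
qed

lemma abs_alasso_inv_le: "\<bar>alasso_inv a t\<bar> \<le> \<bar>t\<bar> + \<bar>a\<bar>"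
proof -
  have "sqrt ((t/2)\<^sup>2 + a\<^sup>2) \<le> \<bar>t/2\<bar> + \<bar>a\<bar>"
    by (rule sqrt_sum_squares_le_sum_abs)
  moreover have "0 \<le> sqrt ((t/2)\<^sup>2 + a\<^sup>2)"
    by simp
  ultimately show ?thesis
    unfolding alasso_inv_def by (cases "0 \<le> t") (simp_all add: abs_le_iff)
qed

lemma abs_alasso_inv_diff_le:
  assumes "t \<noteq> 0"
  shows "\<bar>alasso_inv a t - t\<bar> \<le> a\<^sup>2 / \<bar>t\<bar>"
proof -
  define s where "s = sqrt ((t/2)\<^sup>2 + a\<^sup>2)"
  have s: "\<bar>t\<bar>/2 \<le> s"
    unfolding s_def using real_sqrt_ge_abs1[of "t/2" a] by simp
  have "\<bar>alasso_inv a t - t\<bar> = s - \<bar>t\<bar>/2"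
    using s unfolding s_def[symmetric] alasso_inv_def by (cases "0 \<le> t") simp_all
  also have "\<dots> = a\<^sup>2 / (s + \<bar>t\<bar>/2)"
  proof -
    have "(s - \<bar>t\<bar>/2) * (s + \<bar>t\<bar>/2) = a\<^sup>2"
      by (simp add: s_def algebra_simps power2_eq_square[symmetric] power_divide)
    moreover have "s + \<bar>t\<bar>/2 \<noteq> 0"
      using s assms by linarith
    ultimately show ?thesis
      by (simp add: nonzero_eq_divide_eq)
  qed
  also have "\<dots> \<le> a\<^sup>2 / \<bar>t\<bar>"
    using s assms by (intro divide_left_mono) auto
  finally show ?thesis .
qed

lemma tendsto_alasso_inv:
  assumes f: "(f \<longlongrightarrow> a) F" and g: "(g \<longlongrightarrow> t) F" and "t \<noteq> 0 \<or> a = 0"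
  shows "((\<lambda>x. alasso_inv (f x) (g x)) \<longlongrightarrow> alasso_inv a t) F"
proof -
  consider (pos) "0 < t" | (neg) "t < 0" | (zero) "t = 0" "a = 0"
    using assms(3) by linarith
  then show ?thesis
  proof cases
    case pos
    have "((\<lambda>x. g x/2 + sqrt ((g x/2)\<^sup>2 + (f x)\<^sup>2)) \<longlongrightarrow> alasso_inv a t) F"
      using pos by (auto simp: alasso_inv_def intro!: tendsto_intros f g)
    moreover have "eventually (\<lambda>x. 0 < g x) F"
      using g pos by (rule order_tendstoD)
    then have "eventually (\<lambda>x. g x/2 + sqrt ((g x/2)\<^sup>2 + (f x)\<^sup>2) = alasso_inv (f x) (g x)) F"
      by eventually_elim (simp add: alasso_inv_def)
    ultimately show ?thesis
      by (rule Lim_transform_eventually)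
  next
    case neg
    have "((\<lambda>x. g x/2 - sqrt ((g x/2)\<^sup>2 + (f x)\<^sup>2)) \<longlongrightarrow> alasso_inv a t) F"
      using neg by (auto simp: alasso_inv_def intro!: tendsto_intros f g)
    moreover have "eventually (\<lambda>x. g x < 0) F"
      using g neg by (rule order_tendstoD)
    then have "eventually (\<lambda>x. g x/2 - sqrt ((g x/2)\<^sup>2 + (f x)\<^sup>2) = alasso_inv (f x) (g x)) F"
      by eventually_elim (simp add: alasso_inv_def)
    ultimately show ?thesis
      by (rule Lim_transform_eventually)
  next
    case zero
    have "((\<lambda>x. \<bar>g x\<bar> + \<bar>f x\<bar>) \<longlongrightarrow> 0) F"
      using tendsto_add[OF tendsto_rabs[OF g] tendsto_rabs[OF f]] zero by simp
    then have "((\<lambda>x. alasso_inv (f x) (g x)) \<longlongrightarrow> 0) F"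
      by (rule Lim_null_comparison[rotated]) (simp add: abs_alasso_inv_le)
    then show ?thesis
      using zero by (simp add: alasso_inv_def)
  qed
qed

lemma tendsto_alasso_inv_diff:
  assumes f: "(f \<longlongrightarrow> a) F" and g: "filterlim g at_infinity F"
  shows "((\<lambda>x. alasso_inv (f x) (g x) - g x) \<longlongrightarrow> 0) F"
proof (rule Lim_null_comparison)
  show "eventually (\<lambda>x. norm (alasso_inv (f x) (g x) - g x) \<le> (f x)\<^sup>2 / \<bar>g x\<bar>) F"
    using filterlim_at_infinity_imp_eventually_ne[OF g, of 0]
    by eventually_elim (simp add: abs_alasso_inv_diff_le)
  have "filterlim (\<lambda>x. \<bar>g x\<bar>) at_infinity F"
    using filterlim_at_top_imp_at_infinity[OF filterlim_at_infinity_imp_norm_at_top[OF g]] by simp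
  then show "((\<lambda>x. (f x)\<^sup>2 / \<bar>g x\<bar>) \<longlongrightarrow> 0) F"
    by (rule tendsto_divide_0[OF tendsto_power[OF f]])
qed

lemma filterlim_at_infinity_if_ereal_tendsto_infinity:
  assumes "((\<lambda>x. ereal (f x)) \<longlongrightarrow> \<nu>) F" "\<bar>\<nu>\<bar> = \<infinity>"
  shows "filterlim f at_infinity F"
proof (cases "\<nu> = \<infinity>")
  case True
  then have "filterlim f at_top F"
    using assms(1) ereal_tendsto_simps2(2)[of f F] by (simp add: comp_def)
  then show ?thesis
    by (rule filterlim_at_top_imp_at_infinity)
next
  case False
  then have "filterlim f at_bot F"
    using assms ereal_tendsto_simps2(3)[of f F] by (cases \<nu>) (simp_all add: comp_def)
  then show ?thesis
    by (rule filterlim_mono[OF _ at_bot_le_at_infinity order_refl])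
qed

lemma G_lim_eq_Phi_alasso_inv: "G_lim m r x = Phi (alasso_inv m (x + r) - r)"
  unfolding G_lim_def alasso_inv_def by (simp add: add.commute field_simps)

lemma G_lim_real_distribution:
  fixes m r :: real
  assumes "0 \<le> m"
  defines "M \<equiv> distr std_normal_distribution borel (\<lambda>z. alasso m (z + r) - r)"
  shows "real_distribution M" and "cdf M = G_lim m r"
proof -
  interpret prob_space std_normal_distribution
    using real_dist_normal_dist by (simp add: real_distribution_def)
  have "(\<lambda>z. alasso m (z + r) - r) \<in> borel_measurable std_normal_distribution"
    unfolding alasso_def by measurable
  then show "real_distribution M"
    unfolding M_def by simp
  have "distributed std_normal_distribution lborel (\<lambda>z. z) std_normal_density"
    by (simp add: distributed_def distr_id2)
  then show "cdf M = G_lim m r"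
    unfolding M_def G_lim_eq_Phi_alasso_inv using assms by (intro ext cdf_alasso_std_normal)
qed

lemma not_isCont_G_lim:
  assumes "0 < m"
  shows "\<not> isCont (G_lim m r) (- r)"
proof
  assume "isCont (G_lim m r) (- r)"
  then have "(G_lim m r \<longlongrightarrow> G_lim m r (- r)) (at_left (- r))"
    by (simp add: isCont_def filterlim_at_split)
  moreover have "eventually (\<lambda>x. x \<in> {- r - 1<..<- r}) (at_left (- r))"
    by (rule eventually_at_left_real) simp
  then have "eventually (\<lambda>x. G_lim m r x \<le> Phi (- m - r)) (at_left (- r))"
  proof eventually_elim
    case (elim x)
    then have "alasso_inv m (x + r) - r \<le> - m - r"
      using alasso_inv_less[of "x + r" m] assms by simp
    then show ?case
      unfolding G_lim_eq_Phi_alasso_inv by (rule monoD[OF strict_mono_mono[OF strict_mono_Phi]])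
  qed
  ultimately have "G_lim m r (- r) \<le> Phi (- m - r)"
    by (rule tendsto_upperbound) simp
  moreover have "G_lim m r (- r) = Phi (m - r)"
    using assms by (simp add: G_lim_eq_Phi_alasso_inv alasso_inv_def)
  moreover have "Phi (- m - r) < Phi (m - r)"
    using assms by (intro strict_monoD[OF strict_mono_Phi]) simp
  ultimately show False
    by simp
qed

lemma tendsto_F_A:
  assumes "\<And>n. 0 \<le> \<mu> n"
    and "(\<lambda>n. alasso_inv (sqrt (real n) * \<mu> n) (x + sqrt (real n) * \<theta> n)
              - sqrt (real n) * \<theta> n) \<longlonglongrightarrow> L"
  shows "(\<lambda>n. F_A n (\<mu> n) (\<theta> n) x) \<longlonglongrightarrow> Phi L"
proof (rule Lim_transform_eventually)
  show "(\<lambda>n. Phi (alasso_inv (sqrt (real n) * \<mu> n) (x + sqrt (real n) * \<theta> n)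
              - sqrt (real n) * \<theta> n)) \<longlonglongrightarrow> Phi L"
    using isCont_Phi assms(2) by (rule isCont_tendsto_compose)
  show "\<forall>\<^sub>F n in sequentially.
      Phi (alasso_inv (sqrt (real n) * \<mu> n) (x + sqrt (real n) * \<theta> n) - sqrt (real n) * \<theta> n)
        = F_A n (\<mu> n) (\<theta> n) x"
    using eventually_gt_at_top[of 0] by eventually_elim (simp add: F_A_eq_Phi_alasso_inv assms(1))
qed

lemma weak_conv_F_A_G_lim:
  assumes "\<And>n. 0 \<le> \<mu> n" and "0 \<le> m"
    and \<mu>: "(\<lambda>n. sqrt (real n) * \<mu> n) \<longlonglongrightarrow> m"
    and \<theta>: "(\<lambda>n. sqrt (real n) * \<theta> n) \<longlonglongrightarrow> r"
  shows "weak_conv (\<lambda>n. F_A n (\<mu> n) (\<theta> n)) (G_lim m r)"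
  unfolding weak_conv_def
proof (intro allI impI)
  fix x assume "isCont (G_lim m r) x"
  then have "x + r \<noteq> 0 \<or> m = 0"
    using not_isCont_G_lim[of m r] \<open>0 \<le> m\<close> by (smt (verit))
  then have "(\<lambda>n. alasso_inv (sqrt (real n) * \<mu> n) (x + sqrt (real n) * \<theta> n)
               - sqrt (real n) * \<theta> n) \<longlonglongrightarrow> alasso_inv m (x + r) - r"
    by (intro tendsto_intros tendsto_alasso_inv \<mu> \<theta>) auto
  then show "(\<lambda>n. F_A n (\<mu> n) (\<theta> n) x) \<longlonglongrightarrow> G_lim m r x"
    unfolding G_lim_eq_Phi_alasso_inv by (rule tendsto_F_A[OF assms(1)])
qed

lemma weak_conv_F_A_Phi:
  assumes "\<And>n. 0 \<le> \<mu> n"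
    and \<mu>: "(\<lambda>n. sqrt (real n) * \<mu> n) \<longlonglongrightarrow> m"
    and \<theta>: "filterlim (\<lambda>n. sqrt (real n) * \<theta> n) at_infinity sequentially"
  shows "weak_conv (\<lambda>n. F_A n (\<mu> n) (\<theta> n)) Phi"
  unfolding weak_conv_def
proof (intro allI impI)
  fix x
  have "filterlim (\<lambda>n. x + sqrt (real n) * \<theta> n) at_infinity sequentially"
    by (rule tendsto_add_filterlim_at_infinity[OF tendsto_const \<theta>])
  then have "(\<lambda>n. alasso_inv (sqrt (real n) * \<mu> n) (x + sqrt (real n) * \<theta> n)
               - (x + sqrt (real n) * \<theta> n) + x) \<longlonglongrightarrow> 0 + x"
    by (intro tendsto_add tendsto_alasso_inv_diff[OF \<mu>] tendsto_const)
  then show "(\<lambda>n. F_A n (\<mu> n) (\<theta> n) x) \<longlonglongrightarrow> Phi x"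
    by (intro tendsto_F_A[OF assms(1)]) simp
qed

theorem theorem2:
  fixes \<mu> \<theta> :: "nat \<Rightarrow> real" and m :: real and \<nu> :: ereal
  assumes mu_pos: "\<And>n. \<mu> n > 0"
    and mu_lim: "\<mu> \<longlonglongrightarrow> 0"
    and m_nonneg: "0 \<le> m"
    and rootn_mu: "(\<lambda>n. sqrt (real n) * \<mu> n) \<longlonglongrightarrow> m"
    and rootn_theta: "(\<lambda>n. ereal (sqrt (real n) * \<theta> n)) \<longlonglongrightarrow> \<nu>"
  shows "(\<nu> \<noteq> \<infinity> \<and> \<nu> \<noteq> -\<infinity> \<longrightarrow>
            weak_conv (\<lambda>n. F_A n (\<mu> n) (\<theta> n)) (G_lim m (real_of_ereal \<nu>))
            \<and> (\<exists>M. real_distribution M \<and> cdf M = G_lim m (real_of_ereal \<nu>)))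
       \<and> (\<bar>\<nu>\<bar> = \<infinity> \<longrightarrow>
            weak_conv (\<lambda>n. F_A n (\<mu> n) (\<theta> n)) Phi)"
proof -
  have mu_nonneg: "0 \<le> \<mu> n" for n
    using mu_pos less_imp_le by blast
  have "weak_conv (\<lambda>n. F_A n (\<mu> n) (\<theta> n)) (G_lim m r)" if "\<nu> = ereal r" for r
    using rootn_theta that by (intro weak_conv_F_A_G_lim mu_nonneg m_nonneg rootn_mu) simp
  moreover have "weak_conv (\<lambda>n. F_A n (\<mu> n) (\<theta> n)) Phi" if "\<bar>\<nu>\<bar> = \<infinity>"
    using mu_nonneg rootn_mu
      filterlim_at_infinity_if_ereal_tendsto_infinity[OF rootn_theta that]
    by (rule weak_conv_F_A_Phi)
  ultimately show ?thesis
    using G_lim_real_distribution[OF m_nonneg] by (cases \<nu>) auto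
qed

end
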